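(* Let $T,S\in\mathcal{B}_A(\mathcal{H})$. Then $$\omega_A(TS)\le \tfrac12\,\omega_A(ST)+\tfrac14\Big(\|T\|_A\|S\|_A+\|TS\|_A\Big).$$
   Context: $\mathcal{H}$ is a complex Hilbert space with inner product $\langle\cdot,\cdot\rangle$, and $A$ is a fixed nonzero positive bounded operator on $\mathcal{H}$. Set $\langle x,y\rangle_A=\langle Ax,y\rangle$ and $\|x\|_A=\|A^{1/2}x\|$. $\mathcal{B}_A(\mathcal{H})$ is the set of bounded operators $T$ for which there exists a bounded $S$ with $\langle Tx,y\rangle_A=\langle x,Sy\rangle_A$ for all $x,y$ (equivalently $\mathcal{R}(T^*A)\subseteq\mathcal{R}(A)$). For an operator $T$ with $\|Tx\|_A\le\lambda\|x\|_A$ for some $\lambda>0$ and all $x$, $\|T\|_A=\sup\{\|Tx\|_A: \|x\|_A=1\}$, and $\omega_A(T)=\sup\{|\langle Tx,x\rangle_A|:\|x\|_A=1\}$ is the $A$-numerical radius. *)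

theory Defs
  imports "HOL-Analysis.Analysis"
begin

text \<open>The inner product is linear in the FIRST argument
and conjugate-linear in the second, following the paper.\<close>

class complex_inner = real_normed_vector +
  fixes scaleC :: "complex \<Rightarrow> 'a \<Rightarrow> 'a" (infixr \<open>*\<^sub>C\<close> 75)
    and cinner :: "'a \<Rightarrow> 'a \<Rightarrow> complex"
  assumes scaleC_add_right: "a *\<^sub>C (x + y) = a *\<^sub>C x + a *\<^sub>C y"
    and scaleC_add_left: "(a + b) *\<^sub>C x = a *\<^sub>C x + b *\<^sub>C x"
    and scaleC_scaleC: "a *\<^sub>C (b *\<^sub>C x) = (a * b) *\<^sub>C x"
    and scaleC_one: "1 *\<^sub>C x = x"
    and scaleR_scaleC: "scaleR r x = complex_of_real r *\<^sub>C x"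
    and cinner_commute: "cinner x y = cnj (cinner y x)"
    and cinner_add_left: "cinner (x + y) z = cinner x z + cinner y z"
    and cinner_scaleC_left: "cinner (a *\<^sub>C x) y = a * cinner x y"
    and cinner_eq_zero_iff: "cinner x x = 0 \<longleftrightarrow> x = 0"
    and norm_eq_sqrt_cinner: "norm x = sqrt (Re (cinner x x))"

class chilbert = complex_inner + complete_space

instantiation complex :: chilbert
begin
definition scaleC_complex :: "complex \<Rightarrow> complex \<Rightarrow> complex" where
  "scaleC_complex a x = a * x"
definition cinner_complex :: "complex \<Rightarrow> complex \<Rightarrow> complex" where
  "cinner_complex x y = x * cnj y"
instance
proof
  fix a b x y z :: complex and r :: real
  show "a *\<^sub>C (x + y) = a *\<^sub>C x + a *\<^sub>C y" by (simp add: scaleC_complex_def algebra_simps)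
  show "(a + b) *\<^sub>C x = a *\<^sub>C x + b *\<^sub>C x" by (simp add: scaleC_complex_def algebra_simps)
  show "a *\<^sub>C (b *\<^sub>C x) = (a * b) *\<^sub>C x" by (simp add: scaleC_complex_def)
  show "1 *\<^sub>C x = x" by (simp add: scaleC_complex_def)
  show "scaleR r x = complex_of_real r *\<^sub>C x" by (simp add: scaleC_complex_def scaleR_conv_of_real)
  show "cinner x y = cnj (cinner y x)" by (simp add: cinner_complex_def)
  show "cinner (x + y) z = cinner x z + cinner y z" by (simp add: cinner_complex_def algebra_simps)
  show "cinner (a *\<^sub>C x) y = a * cinner x y" by (simp add: cinner_complex_def scaleC_complex_def)
  show "cinner x x = 0 \<longleftrightarrow> x = 0" by (simp add: cinner_complex_def)
  show "norm x = sqrt (Re (cinner x x))"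
    by (simp add: cinner_complex_def complex_mult_cnj cmod_def power2_eq_square)
qed
end

definition bounded_clinear_op :: "('a::complex_inner \<Rightarrow> 'a) \<Rightarrow> bool" where
  "bounded_clinear_op T \<longleftrightarrow>
     (\<forall>x y. T (x + y) = T x + T y) \<and> (\<forall>c x. T (c *\<^sub>C x) = c *\<^sub>C T x) \<and>
     (\<exists>K. \<forall>x. norm (T x) \<le> norm x * K)"

definition positive_op :: "('a::complex_inner \<Rightarrow> 'a) \<Rightarrow> bool" where
  "positive_op A \<longleftrightarrow> bounded_clinear_op A \<and>
     (\<forall>x. Im (cinner (A x) x) = 0 \<and> Re (cinner (A x) x) \<ge> 0)"

definition normA :: "('a::complex_inner \<Rightarrow> 'a) \<Rightarrow> 'a \<Rightarrow> real" where
  "normA A x = sqrt (Re (cinner (A x) x))"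

definition BA :: "('a::complex_inner \<Rightarrow> 'a) \<Rightarrow> ('a \<Rightarrow> 'a) set" where
  "BA A = {T. bounded_clinear_op T \<and>
     (\<exists>S. bounded_clinear_op S \<and> (\<forall>x y. cinner (A (T x)) y = cinner (A x) (S y)))}"

definition opnormA :: "('a::complex_inner \<Rightarrow> 'a) \<Rightarrow> ('a \<Rightarrow> 'a) \<Rightarrow> real" where
  "opnormA A T = Sup {normA A (T x) | x. normA A x = 1}"

definition omegaA :: "('a::complex_inner \<Rightarrow> 'a) \<Rightarrow> ('a \<Rightarrow> 'a) \<Rightarrow> real" where
  "omegaA A T = Sup {cmod (cinner (A (T x)) x) | x. normA A x = 1}"

end

theory Submission
  imports Defs
begin

text \<open>
  Fix an \<open>A\<close>-unit vector \<open>x\<close>, let \<open>c = \<langle>TSx, x\<rangle>\<^sub>A\<close> and put \<open>X = tT\<close>, \<open>Y = (\<omega>/t) S\<close>,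
  where \<open>\<omega>\<close> is unimodular with \<open>\<omega>c = |c|\<close> and \<open>t = sqrt (\<parallel>S\<parallel>\<^sub>A / \<parallel>T\<parallel>\<^sub>A)\<close> balances the factors,
  so that \<open>X\<^sup>\<sharp>\<close> and \<open>Y\<close> both have \<open>A\<close>-norm at most \<open>sqrt (\<parallel>T\<parallel>\<^sub>A \<parallel>S\<parallel>\<^sub>A)\<close>.
  For \<open>z = Yx + X\<^sup>\<sharp>x\<close> polarization gives \<open>4|c| \<le> \<parallel>z\<parallel>\<^sub>A\<^sup>2\<close>. As \<open>z = (X + Y\<^sup>\<sharp>)\<^sup>\<sharp>x\<close>,
  Cauchy-Schwarz gives \<open>\<parallel>z\<parallel>\<^sub>A\<^sup>4 \<le> \<parallel>Xz + Y\<^sup>\<sharp>z\<parallel>\<^sub>A\<^sup>2 = \<parallel>Xz\<parallel>\<^sub>A\<^sup>2 + \<parallel>Y\<^sup>\<sharp>z\<parallel>\<^sub>A\<^sup>2 + 2 Re \<langle>YXz, z\<rangle>\<^sub>A\<close>,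
  where the cross term is at most \<open>\<omega>\<^sub>A(ST) \<parallel>z\<parallel>\<^sub>A\<^sup>2\<close> and the squares add up to at most
  \<open>(\<parallel>T\<parallel>\<^sub>A \<parallel>S\<parallel>\<^sub>A + \<parallel>TS\<parallel>\<^sub>A) \<parallel>z\<parallel>\<^sub>A\<^sup>2\<close>. Hence \<open>4|c| \<le> \<parallel>T\<parallel>\<^sub>A \<parallel>S\<parallel>\<^sub>A + \<parallel>TS\<parallel>\<^sub>A + 2 \<omega>\<^sub>A(ST)\<close>.
\<close>

lemma le_of_power2_le_mult:
  fixes x M :: real
  assumes "0 \<le> M" and "x\<^sup>2 \<le> x * M"
  shows "x \<le> M"
  using assms by (cases "0 < x") (auto simp: power2_eq_square)

lemma discriminant_le_of_quadratic_nonneg: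
  fixes a b d :: real
  assumes nonneg: "\<And>r. 0 \<le> a - 2 * r * b + r\<^sup>2 * b * d" and "0 \<le> b" "0 \<le> d"
  shows "b \<le> a * d"
proof -
  have "0 \<le> a" using nonneg[of 0] by simp
  consider "b = 0" | "0 < b" "d = 0" | "0 < b" "0 < d" using assms by linarith
  then show ?thesis
  proof cases
    case 1
    then show ?thesis using \<open>0 \<le> a\<close> \<open>0 \<le> d\<close> by simp
  next
    case 2
    then show ?thesis using nonneg[of "(a + 1) / (2 * b)"] by simp
  next
    case 3
    then show ?thesis using nonneg[of "1 / d"] by (simp add: power2_eq_square field_simps)
  qed
qed

lemma log_convex_seq_ratio_le:
  fixes q :: "nat \<Rightarrow> real"
  assumes q0: "0 \<le> q 0"
    and log_convex: "\<And>k. (q (Suc k))\<^sup>2 \<le> q k * q (Suc (Suc k))"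
    and bound: "\<And>k. q k \<le> C * K ^ k" and K: "0 < K"
  shows "q 1 \<le> K * q 0"
proof (rule ccontr)
  assume "\<not> q 1 \<le> K * q 0"
  then have q1: "K * q 0 < q 1" by simp
  have "q 0 \<noteq> 0"
  proof
    assume "q 0 = 0"
    then have "(q 1)\<^sup>2 \<le> 0" using log_convex[of 0] by simp
    with q1 \<open>q 0 = 0\<close> show False by simp
  qed
  with q0 have "0 < q 0" by simp
  define \<rho> where "\<rho> = q 1 / q 0"
  have "K < \<rho>" using q1 \<open>0 < q 0\<close> by (simp add: \<rho>_def less_divide_eq)
  have ratio: "0 < q k \<and> \<rho> * q k \<le> q (Suc k)" for k
  proof (induction k)
    case 0
    then show ?case using \<open>0 < q 0\<close> by (simp add: \<rho>_def)
  next
    case (Suc k)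
    have "0 < \<rho> * q k" using Suc \<open>K < \<rho>\<close> K by simp
    with Suc have "0 < q (Suc k)" by linarith
    have "q k * (\<rho> * q (Suc k)) \<le> q (Suc k) * q (Suc k)"
      using Suc \<open>0 < q (Suc k)\<close> by (simp add: mult.left_commute mult_left_mono)
    also have "\<dots> \<le> q k * q (Suc (Suc k))"
      using log_convex by (simp add: power2_eq_square)
    finally show ?case
      using Suc \<open>0 < q (Suc k)\<close> by (simp add: mult_le_cancel_left_pos)
  qed
  have geometric: "q 0 * \<rho> ^ k \<le> q k" for k
  proof (induction k)
    case (Suc k)
    then have "q 0 * \<rho> ^ Suc k \<le> \<rho> * q k"
      using \<open>K < \<rho>\<close> K by (simp add: mult.left_commute mult_left_mono)
    then show ?case using ratio[of k] by linarith
  qed simp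
  have "1 < \<rho> / K" using \<open>K < \<rho>\<close> K by simp
  then obtain n where n: "C / q 0 < (\<rho> / K) ^ n" using real_arch_pow by blast
  have "q 0 * \<rho> ^ n \<le> C * K ^ n" using geometric[of n] bound[of n] by linarith
  then have "(\<rho> / K) ^ n \<le> C / q 0"
    using \<open>0 < q 0\<close> K by (simp add: field_simps)
  with n show False by simp
qed

lemma norm_funpow_le:
  fixes f :: "'a::real_normed_vector \<Rightarrow> 'a"
  assumes "\<And>x. norm (f x) \<le> K * norm x" and "0 \<le> K"
  shows "norm ((f ^^ n) x) \<le> K ^ n * norm x"
proof (induction n)
  case (Suc n)
  have "norm ((f ^^ Suc n) x) \<le> K * norm ((f ^^ n) x)" using assms(1) by simp
  also have "\<dots> \<le> K * (K ^ n * norm x)" using Suc assms(2) by (rule mult_left_mono)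
  finally show ?case by simp
qed simp

lemma sqrt_divide_balance:
  fixes a b :: real
  assumes "0 < a" "0 < b"
  shows "sqrt (b / a) * a = sqrt (a * b)" and "b / sqrt (b / a) = sqrt (a * b)"
proof -
  have "sqrt (b / a) * a = sqrt (b / a * a\<^sup>2)"
    unfolding real_sqrt_mult using \<open>0 < a\<close> by simp
  then show "sqrt (b / a) * a = sqrt (a * b)"
    using \<open>0 < a\<close> by (simp add: power2_eq_square field_simps)
  have "b / sqrt (b / a) = sqrt (b\<^sup>2 / (b / a))"
    unfolding real_sqrt_divide using \<open>0 < b\<close> by simp
  then show "b / sqrt (b / a) = sqrt (a * b)"
    using \<open>0 < b\<close> by (simp add: power2_eq_square field_simps)
qed

lemma cis_minus_Arg_mult: "cis (- Arg z) * z = complex_of_real (cmod z)"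
  using rcis_cmod_Arg[of z] by (metis cis_rcis_eq rcis_mult mult_1 add.left_inverse rcis_zero_arg)

lemma cinner_add_right: "cinner (x::'a::complex_inner) (y + z) = cinner x y + cinner x z"
  by (metis cinner_commute cinner_add_left complex_cnj_add)

lemma cinner_scaleC_right: "cinner (x::'a::complex_inner) (a *\<^sub>C y) = cnj a * cinner x y"
  by (metis cinner_commute cinner_scaleC_left complex_cnj_mult)

lemma cinner_diff_left: "cinner ((x::'a::complex_inner) - y) z = cinner x z - cinner y z"
  using cinner_add_left[of "x - y" y z] by (simp add: eq_diff_eq)

lemma cinner_diff_right: "cinner (x::'a::complex_inner) (y - z) = cinner x y - cinner x z"
  using cinner_add_right[of x "y - z" z] by (simp add: eq_diff_eq)

lemma Re_cinner_self_nonneg: "0 \<le> Re (cinner (x::'a::complex_inner) x)"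
  by (metis norm_eq_sqrt_cinner norm_ge_zero real_sqrt_lt_0_iff not_le)

lemma Im_cinner_self: "Im (cinner (x::'a::complex_inner) x) = 0"
  by (metis cinner_commute cnj.sel(2) neg_equal_zero)

lemma bounded_clinear_op_add: "bounded_clinear_op T \<Longrightarrow> T (x + y) = T x + T y"
  by (simp add: bounded_clinear_op_def)

lemma bounded_clinear_op_scaleC: "bounded_clinear_op T \<Longrightarrow> T (c *\<^sub>C x) = c *\<^sub>C T x"
  by (simp add: bounded_clinear_op_def)

lemma bounded_clinear_op_diff: "bounded_clinear_op T \<Longrightarrow> T (x - y) = T x - T y"
  using bounded_clinear_op_add[of T "x - y" y] by (simp add: eq_diff_eq)

lemma bounded_clinear_op_pos_bound:
  assumes "bounded_clinear_op T"
  obtains K where "0 < K" "\<And>x. norm (T x) \<le> K * norm x"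
proof -
  obtain K where K: "\<And>x. norm (T x) \<le> norm x * K"
    using assms by (auto simp: bounded_clinear_op_def)
  have "norm (T x) \<le> max K 1 * norm x" for x
    using K[of x] mult_left_mono[OF max.cobounded1[of K 1] norm_ge_zero[of x]]
    by (simp add: mult.commute)
  then show thesis by (rule that[rotated]) simp
qed

lemma bounded_clinear_op_comp:
  assumes T: "bounded_clinear_op T" and S: "bounded_clinear_op S"
  shows "bounded_clinear_op (T \<circ> S)"
proof -
  obtain K L where "0 < K" "\<And>x. norm (T x) \<le> K * norm x"
    and "0 < L" "\<And>x. norm (S x) \<le> L * norm x"
    using bounded_clinear_op_pos_bound[OF T] bounded_clinear_op_pos_bound[OF S] by metis
  then have "norm (T (S x)) \<le> norm x * (K * L)" for x
    by (metis mult.commute mult.left_commute mult_left_mono order_trans less_imp_le)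
  then show ?thesis
    using T S by (simp add: bounded_clinear_op_def) blast
qed

lemma positive_op_id: "positive_op (\<lambda>x::'a::complex_inner. x)"
  unfolding positive_op_def bounded_clinear_op_def
  using Im_cinner_self Re_cinner_self_nonneg by (metis mult.right_neutral order_refl)

section \<open>The semi-inner product of a positive operator\<close>

locale positive_operator =
  fixes A :: "'a::complex_inner \<Rightarrow> 'a"
  assumes positive: "positive_op A"
begin

lemma linear: "bounded_clinear_op A"
  using positive by (simp add: positive_op_def)

lemma cinnerA_add_left: "cinner (A (x + y)) z = cinner (A x) z + cinner (A y) z"
  by (simp add: bounded_clinear_op_add[OF linear] cinner_add_left)

lemma cinnerA_scaleC_left: "cinner (A (c *\<^sub>C x)) z = c * cinner (A x) z"
  by (simp add: bounded_clinear_op_scaleC[OF linear] cinner_scaleC_left)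

lemma cinnerA_diff_left: "cinner (A (x - y)) z = cinner (A x) z - cinner (A y) z"
  by (simp add: bounded_clinear_op_diff[OF linear] cinner_diff_left)

lemma Re_cinnerA_self_nonneg: "0 \<le> Re (cinner (A x) x)"
  using positive by (simp add: positive_op_def)

lemma normA_nonneg: "0 \<le> normA A x"
  using Re_cinnerA_self_nonneg by (simp add: normA_def)

lemma power2_normA: "(normA A x)\<^sup>2 = Re (cinner (A x) x)"
  using Re_cinnerA_self_nonneg by (simp add: normA_def)

lemma cinnerA_self: "cinner (A x) x = complex_of_real ((normA A x)\<^sup>2)"
proof -
  have "Im (cinner (A x) x) = 0" using positive by (simp add: positive_op_def)
  then show ?thesis by (simp add: power2_normA complex_eq_iff)
qed

text \<open>Polarization, using that \<open>\<langle>Ax, x\<rangle>\<close> is real.\<close>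
lemma cinnerA_commute: "cinner (A y) x = cnj (cinner (A x) y)"
proof -
  define a b where "a = cinner (A x) y" and "b = cinner (A y) x"
  have "cinner (A (x + y)) (x + y) = cinner (A x) x + a + b + cinner (A y) y"
    by (simp add: cinnerA_add_left cinner_add_right a_def b_def)
  then have "Im a + Im b = 0"
    using cinnerA_self[of x] cinnerA_self[of y] cinnerA_self[of "x + y"]
    by (simp add: complex_eq_iff)
  have "cinner (A (x + \<i> *\<^sub>C y)) (x + \<i> *\<^sub>C y) = cinner (A x) x - \<i> * a + \<i> * b + cinner (A y) y"
    by (simp add: cinnerA_add_left cinnerA_scaleC_left cinner_add_right cinner_scaleC_right
        a_def b_def algebra_simps)
  then have "Re b - Re a = 0"
    using cinnerA_self[of x] cinnerA_self[of y] cinnerA_self[of "x + \<i> *\<^sub>C y"]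
    by (simp add: complex_eq_iff)
  with \<open>Im a + Im b = 0\<close> show ?thesis
    by (simp add: a_def b_def complex_eq_iff)
qed

lemma cauchy_schwarz: "cmod (cinner (A x) y) \<le> normA A x * normA A y"
proof -
  define c where "c = cinner (A x) y"
  define a d where "a = (normA A x)\<^sup>2" and "d = (normA A y)\<^sup>2"
  have "0 \<le> a - 2 * r * (cmod c)\<^sup>2 + r\<^sup>2 * (cmod c)\<^sup>2 * d" for r
  proof -
    define l where "l = complex_of_real r * c"
    have "cinner (A (x - l *\<^sub>C y)) (x - l *\<^sub>C y)
        = cinner (A x) x - cnj l * c - l * cinner (A y) x + l * cnj l * cinner (A y) y"
      by (simp add: cinnerA_diff_left cinnerA_scaleC_left cinner_diff_right cinner_scaleC_right
          c_def algebra_simps)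
    also have "\<dots> = complex_of_real a - 2 * complex_of_real r * (c * cnj c)
        + complex_of_real r ^ 2 * (c * cnj c) * complex_of_real d"
      by (simp add: cinnerA_self a_def d_def l_def cinnerA_commute[of y x] c_def[symmetric]
          power2_eq_square algebra_simps)
    also have "\<dots> = complex_of_real (a - 2 * r * (cmod c)\<^sup>2 + r\<^sup>2 * (cmod c)\<^sup>2 * d)"
      by (simp only: complex_norm_square[symmetric] of_real_mult of_real_add of_real_diff
          of_real_power of_real_numeral)
    finally have "Re (cinner (A (x - l *\<^sub>C y)) (x - l *\<^sub>C y))
        = a - 2 * r * (cmod c)\<^sup>2 + r\<^sup>2 * (cmod c)\<^sup>2 * d"
      by simp
    then show ?thesis using Re_cinnerA_self_nonneg[of "x - l *\<^sub>C y"] by linarith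
  qed
  then have "(cmod c)\<^sup>2 \<le> a * d"
    by (rule discriminant_le_of_quadratic_nonneg) (simp_all add: d_def)
  then have "sqrt ((cmod c)\<^sup>2) \<le> sqrt (a * d)" by (rule real_sqrt_le_mono)
  then show ?thesis by (simp add: c_def a_def d_def real_sqrt_mult normA_nonneg)
qed

lemma normA_scaleC: "normA A (c *\<^sub>C x) = cmod c * normA A x"
proof -
  have "cinner (A (c *\<^sub>C x)) (c *\<^sub>C x) = (c * cnj c) * cinner (A x) x"
    by (simp add: cinnerA_scaleC_left cinner_scaleC_right mult.assoc)
  also have "\<dots> = complex_of_real ((cmod c)\<^sup>2 * (normA A x)\<^sup>2)"
    by (simp only: complex_norm_square[symmetric] cinnerA_self of_real_mult)
  finally have "(normA A (c *\<^sub>C x))\<^sup>2 = (cmod c * normA A x)\<^sup>2"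
    by (simp add: power2_normA power_mult_distrib)
  then show ?thesis
    using normA_nonneg by simp
qed

lemma power2_normA_add:
  "(normA A (x + y))\<^sup>2 = (normA A x)\<^sup>2 + (normA A y)\<^sup>2 + 2 * Re (cinner (A x) y)"
  by (simp add: power2_normA cinnerA_add_left cinner_add_right cinnerA_commute[of y x])

lemma power2_normA_diff:
  "(normA A (x - y))\<^sup>2 = (normA A x)\<^sup>2 + (normA A y)\<^sup>2 - 2 * Re (cinner (A x) y)"
  by (simp add: power2_normA cinnerA_diff_left cinner_diff_right cinnerA_commute[of y x])

lemma four_Re_cinnerA_le_power2_normA_add: "4 * Re (cinner (A x) y) \<le> (normA A (x + y))\<^sup>2"
  using power2_normA_add[of x y] power2_normA_diff[of x y] zero_le_power2[of "normA A (x - y)"]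
  by linarith

lemma ex_normA_eq_1:
  assumes "A \<noteq> (\<lambda>x. 0)"
  shows "\<exists>x. normA A x = 1"
proof -
  obtain y where "A y \<noteq> 0" using assms by blast
  then have "cinner (A y) (A y) \<noteq> 0" by (simp add: cinner_eq_zero_iff)
  then have "normA A y \<noteq> 0" using cauchy_schwarz[of y "A y"] by auto
  then have "normA A (complex_of_real (1 / normA A y) *\<^sub>C y) = 1"
    using normA_nonneg[of y] by (simp add: normA_scaleC norm_divide)
  then show ?thesis by blast
qed

end

lemma cinner_cauchy_schwarz: "cmod (cinner (x::'a::complex_inner) y) \<le> norm x * norm y"
  using positive_operator.cauchy_schwarz[OF positive_operator.intro[OF positive_op_id], of x y]
  by (simp add: normA_def norm_eq_sqrt_cinner)

section \<open>\<open>A\<close>-adjoints and \<open>A\<close>-bounded operators\<close>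

text \<open>A relation rather than an operator: \<open>A\<close>-adjoints are not unique unless \<open>A\<close> is injective.\<close>
definition A_adjoint :: "('a::complex_inner \<Rightarrow> 'a) \<Rightarrow> ('a \<Rightarrow> 'a) \<Rightarrow> ('a \<Rightarrow> 'a) \<Rightarrow> bool" where
  "A_adjoint A T T' \<longleftrightarrow> (\<forall>x y. cinner (A (T x)) y = cinner (A x) (T' y))"

definition A_bounded :: "('a::complex_inner \<Rightarrow> 'a) \<Rightarrow> ('a \<Rightarrow> 'a) \<Rightarrow> bool" where
  "A_bounded A T \<longleftrightarrow> (\<exists>K\<ge>0. \<forall>x. normA A (T x) \<le> K * normA A x)"

lemma BA_iff:
  "T \<in> BA A \<longleftrightarrow> bounded_clinear_op T \<and> (\<exists>T'. bounded_clinear_op T' \<and> A_adjoint A T T')"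
  by (auto simp: BA_def A_adjoint_def)

lemma omegaA_le:
  assumes "\<exists>x. normA A x = 1"
    and "\<And>x. normA A x = 1 \<Longrightarrow> cmod (cinner (A (T x)) x) \<le> M"
  shows "omegaA A T \<le> M"
  unfolding omegaA_def using assms by (intro cSup_least) auto

context positive_operator
begin

lemma normA_le_norm:
  obtains C where "0 \<le> C" "\<And>x. normA A x \<le> C * norm x"
proof -
  obtain K where K: "0 < K" "\<And>x. norm (A x) \<le> K * norm x"
    using bounded_clinear_op_pos_bound[OF linear] by blast
  have "(normA A x)\<^sup>2 \<le> (sqrt K * norm x)\<^sup>2" for x
  proof -
    have "(normA A x)\<^sup>2 \<le> cmod (cinner (A x) x)"
      by (simp add: power2_normA complex_Re_le_cmod)
    also have "\<dots> \<le> K * norm x * norm x"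
      using cinner_cauchy_schwarz[of "A x" x] K mult_right_mono[OF K(2)[of x] norm_ge_zero[of x]]
      by linarith
    finally show ?thesis
      using K by (simp add: power_mult_distrib power2_eq_square[of "norm x"] mult.assoc)
  qed
  then have "normA A x \<le> sqrt K * norm x" for x
    using K
    by (meson power2_le_imp_le mult_nonneg_nonneg norm_ge_zero real_sqrt_ge_zero less_imp_le)
  then show thesis using K by (intro that[of "sqrt K"]) simp_all
qed

lemma A_adjoint_sym: "A_adjoint A T T' \<Longrightarrow> A_adjoint A T' T"
  unfolding A_adjoint_def by (metis cinnerA_commute)

lemma A_adjoint_comp:
  "A_adjoint A T T' \<Longrightarrow> A_adjoint A S S' \<Longrightarrow> A_adjoint A (T \<circ> S) (S' \<circ> T')"
  by (simp add: A_adjoint_def)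

lemma A_adjoint_add:
  "A_adjoint A T T' \<Longrightarrow> A_adjoint A S S' \<Longrightarrow>
    A_adjoint A (\<lambda>x. T x + S x) (\<lambda>x. T' x + S' x)"
  by (simp add: A_adjoint_def cinnerA_add_left cinner_add_right)

lemma A_adjoint_scaleC:
  "A_adjoint A T T' \<Longrightarrow> A_adjoint A (\<lambda>x. c *\<^sub>C T x) (\<lambda>x. cnj c *\<^sub>C T' x)"
  by (simp add: A_adjoint_def cinnerA_scaleC_left cinner_scaleC_right)

lemma power2_normA_le_adjoint:
  assumes "A_adjoint A T T'"
  shows "(normA A (T x))\<^sup>2 \<le> normA A x * normA A (T' (T x))"
proof -
  have "(normA A (T x))\<^sup>2 = Re (cinner (A x) (T' (T x)))"
    using assms by (simp add: power2_normA A_adjoint_def)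
  also have "\<dots> \<le> normA A x * normA A (T' (T x))"
    using complex_Re_le_cmod cauchy_schwarz order_trans by blast
  finally show ?thesis .
qed

lemma A_adjoint_normA_le:
  assumes adj: "A_adjoint A T T'" and T: "\<And>x. normA A (T x) \<le> K * normA A x"
  shows "normA A (T' x) \<le> K * normA A x"
proof (rule le_of_power2_le_mult)
  show "0 \<le> K * normA A x" using T[of x] normA_nonneg[of "T x"] by linarith
  have "(normA A (T' x))\<^sup>2 \<le> normA A x * normA A (T (T' x))"
    using power2_normA_le_adjoint[OF A_adjoint_sym[OF adj]] .
  also have "\<dots> \<le> normA A x * (K * normA A (T' x))"
    using T normA_nonneg by (rule mult_left_mono)
  finally show "(normA A (T' x))\<^sup>2 \<le> normA A (T' x) * (K * normA A x)"
    by (simp add: ac_simps)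
qed

lemma A_bounded_comp: "A_bounded A T \<Longrightarrow> A_bounded A S \<Longrightarrow> A_bounded A (T \<circ> S)"
  unfolding A_bounded_def
  by (metis (no_types, opaque_lifting) comp_apply mult.assoc mult_left_mono mult_nonneg_nonneg
      order_trans)

text \<open>With \<open>R = T\<^sup>\<sharp>T\<close>, the sequence
  \<open>k \<mapsto> \<parallel>R\<^sup>k x\<parallel>\<^sub>A\<close> is log-convex and grows at most geometrically, which bounds its first
  ratio without any square root of \<open>A\<close>.\<close>
lemma BA_A_bounded:
  assumes "T \<in> BA A"
  shows "A_bounded A T"
proof -
  obtain T' where "bounded_clinear_op T" "bounded_clinear_op T'" and adj: "A_adjoint A T T'"
    using assms by (auto simp: BA_iff)
  define R where "R = T' \<circ> T"
  have adjR: "A_adjoint A R R"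
    unfolding R_def using A_adjoint_comp[OF A_adjoint_sym[OF adj] adj] .
  obtain K where K: "0 < K" "\<And>x. norm (R x) \<le> K * norm x"
    using bounded_clinear_op_pos_bound bounded_clinear_op_comp \<open>bounded_clinear_op T\<close>
      \<open>bounded_clinear_op T'\<close> unfolding R_def by metis
  obtain C where C: "0 \<le> C" "\<And>x. normA A x \<le> C * norm x"
    using normA_le_norm by blast
  have "normA A (T x) \<le> sqrt K * normA A x" for x
  proof -
    define q where "q k = normA A ((R ^^ k) x)" for k
    have "q 1 \<le> K * q 0"
    proof (rule log_convex_seq_ratio_le)
      show "(q (Suc k))\<^sup>2 \<le> q k * q (Suc (Suc k))" for k
        using power2_normA_le_adjoint[OF adjR, of "(R ^^ k) x"] by (simp add: q_def)
      show "q k \<le> (C * norm x) * K ^ k" for k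
      proof -
        have "q k \<le> C * norm ((R ^^ k) x)" using C(2) by (simp add: q_def)
        also have "\<dots> \<le> C * (K ^ k * norm x)"
          using norm_funpow_le[of R K k x] K C(1) by (simp add: mult_left_mono)
        finally show ?thesis by (simp add: ac_simps)
      qed
    qed (simp_all add: q_def normA_nonneg K)
    have "(normA A (T x))\<^sup>2 \<le> normA A x * q 1"
      using power2_normA_le_adjoint[OF adj, of x] by (simp add: q_def R_def)
    also have "\<dots> \<le> normA A x * (K * normA A x)"
      using \<open>q 1 \<le> K * q 0\<close> normA_nonneg by (simp add: q_def mult_left_mono)
    also have "\<dots> = (sqrt K * normA A x)\<^sup>2"
      using K by (simp add: power_mult_distrib power2_eq_square[of "normA A x"] ac_simps)
    finally have "(normA A (T x))\<^sup>2 \<le> (sqrt K * normA A x)\<^sup>2" .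
    then show ?thesis
      by (rule power2_le_imp_le) (use K normA_nonneg in simp)
  qed
  then show ?thesis
    unfolding A_bounded_def by (meson real_sqrt_ge_zero K(1) less_imp_le)
qed

lemma le_Sup_normA_sphere:
  fixes f :: "'a \<Rightarrow> real"
  assumes "0 < p"
    and bdd: "\<And>x. normA A x = 1 \<Longrightarrow> f x \<le> K"
    and homogeneous: "\<And>r x. 0 < r \<Longrightarrow> f (complex_of_real r *\<^sub>C x) = r ^ p * f x"
    and null: "normA A x = 0 \<Longrightarrow> f x \<le> 0"
  shows "f x \<le> Sup {f x | x. normA A x = 1} * normA A x ^ p"
proof (cases "normA A x = 0")
  case True
  then show ?thesis using null \<open>0 < p\<close> by (simp add: power_0_left)
next
  case False
  then have pos: "0 < normA A x" using normA_nonneg by (simp add: order_less_le)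
  define y where "y = complex_of_real (1 / normA A x) *\<^sub>C x"
  have "normA A y = 1" using pos by (simp add: y_def normA_scaleC norm_divide)
  then have "f y \<le> Sup {f x | x. normA A x = 1}"
    by (intro cSup_upper bdd_aboveI[where M = K]) (auto intro: bdd)
  moreover have "f y = f x / normA A x ^ p"
    using pos homogeneous[of "1 / normA A x" x] by (simp add: y_def power_one_over)
  ultimately show ?thesis using pos by (simp add: divide_le_eq)
qed

lemma normA_le_opnormA:
  assumes "A_bounded A T" and "bounded_clinear_op T"
  shows "normA A (T x) \<le> opnormA A T * normA A x"
proof -
  obtain K where K: "\<And>x. normA A (T x) \<le> K * normA A x"
    using assms(1) by (auto simp: A_bounded_def)
  have "normA A (T x) \<le> Sup {normA A (T x) | x. normA A x = 1} * normA A x ^ 1"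
  proof (rule le_Sup_normA_sphere)
    show "normA A (T y) \<le> K" if "normA A y = 1" for y using K[of y] that by simp
    show "normA A (T x) \<le> 0" if "normA A x = 0" using K[of x] that by simp
  qed (simp_all add: bounded_clinear_op_scaleC[OF assms(2)] normA_scaleC)
  then show ?thesis by (simp add: opnormA_def)
qed

lemma cmod_cinnerA_le_omegaA:
  assumes "A_bounded A T" and "bounded_clinear_op T"
  shows "cmod (cinner (A (T x)) x) \<le> omegaA A T * (normA A x)\<^sup>2"
proof -
  obtain K where K: "\<And>x. normA A (T x) \<le> K * normA A x"
    using assms(1) by (auto simp: A_bounded_def)
  have bound: "cmod (cinner (A (T x)) x) \<le> K * normA A x * normA A x" for x
    using cauchy_schwarz[of "T x" x] mult_right_mono[OF K[of x] normA_nonneg[of x]] by linarith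
  have "cmod (cinner (A (T x)) x)
      \<le> Sup {cmod (cinner (A (T x)) x) | x. normA A x = 1} * normA A x ^ 2"
  proof (rule le_Sup_normA_sphere)
    show "cmod (cinner (A (T y)) y) \<le> K" if "normA A y = 1" for y using bound[of y] that by simp
    show "cmod (cinner (A (T x)) x) \<le> 0" if "normA A x = 0" using bound[of x] that by simp
  qed (simp_all add: bounded_clinear_op_scaleC[OF assms(2)] cinnerA_scaleC_left
      cinner_scaleC_right norm_mult power2_eq_square)
  then show ?thesis by (simp add: omegaA_def)
qed

section \<open>The numerical radius of a product\<close>

text \<open>A pointwise form of Kittaneh's norm inequality for \<open>X\<^sup>\<sharp>X + YY\<^sup>\<sharp>\<close>: the left-hand side
  equals \<open>\<langle>z, g\<rangle>\<^sub>A\<close> with \<open>g = X\<^sup>\<sharp>Xz + YY\<^sup>\<sharp>z\<close>, and \<open>\<parallel>g\<parallel>\<^sub>A\<^sup>2\<close> is bounded by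
  \<open>(\<alpha>\<^sup>2 + \<gamma>)\<close> times the left-hand side.\<close>
lemma power2_normA_add_adjoint_le:
  assumes adjX: "A_adjoint A X X'" and adjY: "A_adjoint A Y Y'"
    and X': "\<And>y. normA A (X' y) \<le> \<alpha> * normA A y"
    and Y: "\<And>y. normA A (Y y) \<le> \<alpha> * normA A y"
    and XY: "\<And>y. normA A (X (Y y)) \<le> \<gamma> * normA A y" and "0 \<le> \<gamma>"
  shows "(normA A (X z))\<^sup>2 + (normA A (Y' z))\<^sup>2 \<le> (\<alpha>\<^sup>2 + \<gamma>) * (normA A z)\<^sup>2"
proof -
  define u v where "u = X z" and "v = Y' z"
  define N where "N = (normA A u)\<^sup>2 + (normA A v)\<^sup>2"
  define g where "g = X' u + Y v"
  have "cinner (A z) g = cinner (A u) u + cinner (A v) v"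
    using adjX A_adjoint_sym[OF adjY]
    by (simp add: A_adjoint_def g_def u_def v_def cinner_add_right)
  then have "N = Re (cinner (A z) g)"
    by (simp add: N_def power2_normA)
  also have "\<dots> \<le> normA A z * normA A g"
    using complex_Re_le_cmod cauchy_schwarz order_trans by blast
  finally have N_le: "N \<le> normA A z * normA A g" .
  have cross: "2 * Re (cinner (A (X' u)) (Y v)) \<le> \<gamma> * N"
  proof -
    have "cmod (cinner (A (X' u)) (Y v)) = cmod (cinner (A (X (Y v))) u)"
      using adjX by (simp add: A_adjoint_def cinnerA_commute[of "X' u"])
    also have "\<dots> \<le> \<gamma> * normA A v * normA A u"
      using cauchy_schwarz[of "X (Y v)" u] mult_right_mono[OF XY[of v] normA_nonneg[of u]]
      by linarith
    finally have "2 * Re (cinner (A (X' u)) (Y v)) \<le> \<gamma> * (2 * normA A u * normA A v)"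
      using complex_Re_le_cmod[of "cinner (A (X' u)) (Y v)"] by (simp add: ac_simps)
    also have "\<dots> \<le> \<gamma> * N"
      using sum_squares_bound[of "normA A u" "normA A v"] \<open>0 \<le> \<gamma>\<close>
      by (simp add: N_def mult_left_mono)
    finally show ?thesis .
  qed
  have "(normA A (X' u))\<^sup>2 \<le> \<alpha>\<^sup>2 * (normA A u)\<^sup>2"
    using power_mono[OF X'[of u] normA_nonneg, of 2] by (simp add: power_mult_distrib)
  moreover have "(normA A (Y v))\<^sup>2 \<le> \<alpha>\<^sup>2 * (normA A v)\<^sup>2"
    using power_mono[OF Y[of v] normA_nonneg, of 2] by (simp add: power_mult_distrib)
  ultimately have g_le: "(normA A g)\<^sup>2 \<le> (\<alpha>\<^sup>2 + \<gamma>) * N"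
    using cross unfolding g_def power2_normA_add N_def by (simp add: algebra_simps)
  have "N\<^sup>2 \<le> (normA A z * normA A g)\<^sup>2"
    using N_le by (rule power_mono) (simp add: N_def)
  also have "\<dots> \<le> (normA A z)\<^sup>2 * ((\<alpha>\<^sup>2 + \<gamma>) * N)"
    unfolding power_mult_distrib using g_le by (rule mult_left_mono) simp
  finally have "N\<^sup>2 \<le> N * ((\<alpha>\<^sup>2 + \<gamma>) * (normA A z)\<^sup>2)"
    by (simp add: mult.commute mult.left_commute)
  then have "N \<le> (\<alpha>\<^sup>2 + \<gamma>) * (normA A z)\<^sup>2"
    by (rule le_of_power2_le_mult[rotated]) (use \<open>0 \<le> \<gamma>\<close> in simp)
  then show ?thesis by (simp add: N_def u_def v_def)
qed

lemma four_Re_cinnerA_comp_le: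
  assumes adjX: "A_adjoint A X X'" and adjY: "A_adjoint A Y Y'"
    and X': "\<And>y. normA A (X' y) \<le> \<alpha> * normA A y"
    and Y: "\<And>y. normA A (Y y) \<le> \<alpha> * normA A y"
    and XY: "\<And>y. normA A (X (Y y)) \<le> \<gamma> * normA A y" and "0 \<le> \<gamma>"
    and YX: "\<And>y. cmod (cinner (A (Y (X y))) y) \<le> w * (normA A y)\<^sup>2" and "0 \<le> w"
    and x: "normA A x = 1"
  shows "4 * Re (cinner (A (X (Y x))) x) \<le> \<alpha>\<^sup>2 + \<gamma> + 2 * w"
proof -
  define z where "z = Y x + X' x"
  have "4 * Re (cinner (A (X (Y x))) x) \<le> (normA A z)\<^sup>2"
    using adjX four_Re_cinnerA_le_power2_normA_add[of "Y x" "X' x"]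
    by (simp add: A_adjoint_def z_def)
  moreover have "(normA A z)\<^sup>2 \<le> \<alpha>\<^sup>2 + \<gamma> + 2 * w"
  proof (rule le_of_power2_le_mult)
    have "A_adjoint A (\<lambda>y. Y y + X' y) (\<lambda>y. Y' y + X y)"
      using A_adjoint_add[OF adjY A_adjoint_sym[OF adjX]] .
    then have "(normA A z)\<^sup>2 \<le> normA A (X z + Y' z)"
      using power2_normA_le_adjoint[of _ _ x] x by (fastforce simp: z_def add.commute)
    then have "((normA A z)\<^sup>2)\<^sup>2 \<le> (normA A (X z + Y' z))\<^sup>2"
      by (rule power_mono) simp
    also have "\<dots> \<le> (\<alpha>\<^sup>2 + \<gamma>) * (normA A z)\<^sup>2 + 2 * (w * (normA A z)\<^sup>2)"
    proof -
      have "Re (cinner (A (X z)) (Y' z)) \<le> w * (normA A z)\<^sup>2"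
        using adjY YX[of z] complex_Re_le_cmod order_trans by (fastforce simp: A_adjoint_def)
      then show ?thesis
        using power2_normA_add_adjoint_le[OF adjX adjY X' Y XY \<open>0 \<le> \<gamma>\<close>, of z]
        by (simp add: power2_normA_add)
    qed
    finally show "((normA A z)\<^sup>2)\<^sup>2 \<le> (normA A z)\<^sup>2 * (\<alpha>\<^sup>2 + \<gamma> + 2 * w)"
      by (simp add: algebra_simps)
  qed (use \<open>0 \<le> \<gamma>\<close> \<open>0 \<le> w\<close> in simp)
  ultimately show ?thesis by linarith
qed

lemma four_cmod_cinnerA_comp_le:
  assumes T: "bounded_clinear_op T" and S: "bounded_clinear_op S"
    and adjT: "A_adjoint A T T'" and adjS: "A_adjoint A S S'"
    and nT: "\<And>y. normA A (T y) \<le> nT * normA A y" "0 < nT"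
    and nS: "\<And>y. normA A (S y) \<le> nS * normA A y" "0 < nS"
    and nTS: "\<And>y. normA A (T (S y)) \<le> nTS * normA A y" "0 \<le> nTS"
    and w: "\<And>y. cmod (cinner (A (S (T y))) y) \<le> w * (normA A y)\<^sup>2" "0 \<le> w"
    and x: "normA A x = 1"
  shows "4 * cmod (cinner (A (T (S x))) x) \<le> nT * nS + nTS + 2 * w"
proof -
  define c where "c = cinner (A (T (S x))) x"
  define t where "t = sqrt (nS / nT)"
  have "0 < t" using nT(2) nS(2) by (simp add: t_def)
  note balance = sqrt_divide_balance[OF nT(2) nS(2), folded t_def]
  define a b where "a = complex_of_real t" and "b = cis (- Arg c) / complex_of_real t"
  have ab: "a * b = cis (- Arg c)" using \<open>0 < t\<close> by (simp add: a_def b_def)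
  have "4 * Re (cinner (A (a *\<^sub>C T (b *\<^sub>C S x))) x) \<le> (sqrt (nT * nS))\<^sup>2 + nTS + 2 * w"
  proof (rule four_Re_cinnerA_comp_le[where X = "\<lambda>y. a *\<^sub>C T y" and X' = "\<lambda>y. cnj a *\<^sub>C T' y"
        and Y = "\<lambda>y. b *\<^sub>C S y" and Y' = "\<lambda>y. cnj b *\<^sub>C S' y"])
    show "normA A (cnj a *\<^sub>C T' y) \<le> sqrt (nT * nS) * normA A y" for y
    proof -
      have "normA A (cnj a *\<^sub>C T' y) = t * normA A (T' y)"
        using \<open>0 < t\<close> by (simp add: a_def normA_scaleC)
      also have "\<dots> \<le> t * nT * normA A y"
        using A_adjoint_normA_le[OF adjT nT(1)] \<open>0 < t\<close> by (simp add: mult.assoc)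
      finally show ?thesis by (simp only: balance)
    qed
    show "normA A (b *\<^sub>C S y) \<le> sqrt (nT * nS) * normA A y" for y
    proof -
      have "normA A (b *\<^sub>C S y) = normA A (S y) / t"
        using \<open>0 < t\<close> by (simp add: b_def normA_scaleC norm_divide)
      also have "\<dots> \<le> nS * normA A y / t"
        using nS(1) \<open>0 < t\<close> by (simp add: divide_right_mono)
      finally show ?thesis by (simp flip: balance(2))
    qed
    show "normA A (a *\<^sub>C T (b *\<^sub>C S y)) \<le> nTS * normA A y" for y
      using nTS(1)[of y] ab
      by (simp add: bounded_clinear_op_scaleC[OF T] normA_scaleC scaleC_scaleC flip: norm_mult)
    show "cmod (cinner (A (b *\<^sub>C S (a *\<^sub>C T y))) y) \<le> w * (normA A y)\<^sup>2" for y
      using w(1)[of y] ab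
      by (simp add: bounded_clinear_op_scaleC[OF S] cinnerA_scaleC_left scaleC_scaleC norm_mult
          mult.commute[of b a])
  qed (use adjT adjS A_adjoint_scaleC nTS(2) w(2) x in auto)
  moreover have "Re (cinner (A (a *\<^sub>C T (b *\<^sub>C S x))) x) = cmod c"
    using ab cis_minus_Arg_mult[of c]
    by (simp add: bounded_clinear_op_scaleC[OF T] cinnerA_scaleC_left scaleC_scaleC c_def)
  ultimately show ?thesis
    using nT(2) nS(2) by (simp add: c_def)
qed

lemma cmod_cinnerA_comp_le:
  assumes T: "bounded_clinear_op T" and S: "bounded_clinear_op S"
    and adjT: "A_adjoint A T T'" and adjS: "A_adjoint A S S'"
    and nT: "\<And>y. normA A (T y) \<le> nT * normA A y"
    and nS: "\<And>y. normA A (S y) \<le> nS * normA A y"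
    and nTS: "\<And>y. normA A (T (S y)) \<le> nTS * normA A y"
    and w: "\<And>y. cmod (cinner (A (S (T y))) y) \<le> w * (normA A y)\<^sup>2"
    and x: "normA A x = 1"
  shows "cmod (cinner (A (T (S x))) x) \<le> 1/2 * w + 1/4 * (nT * nS + nTS)"
proof -
  have "0 \<le> nT" "0 \<le> nS" "0 \<le> nTS" "0 \<le> w"
    using nT[of x] nS[of x] nTS[of x] w[of x] x
      normA_nonneg[of "T x"] normA_nonneg[of "S x"] normA_nonneg[of "T (S x)"]
    by (simp_all, meson norm_ge_zero order_trans)
  show ?thesis
  proof (cases "nT = 0 \<or> nS = 0")
    case True
    have "cmod (cinner (A (T (S x))) x) \<le> normA A (T (S x))"
      using cauchy_schwarz[of "T (S x)" x] x by simp
    also have "\<dots> \<le> nT * (nS * normA A x)"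
      using nT[of "S x"] mult_left_mono[OF nS[of x] \<open>0 \<le> nT\<close>] by linarith
    finally show ?thesis
      using True \<open>0 \<le> nTS\<close> \<open>0 \<le> w\<close> by auto
  next
    case False
    then show ?thesis
      using four_cmod_cinnerA_comp_le[OF T S adjT adjS nT _ nS _ nTS _ w _ x]
        \<open>0 \<le> nT\<close> \<open>0 \<le> nS\<close> \<open>0 \<le> nTS\<close> \<open>0 \<le> w\<close>
      by (simp add: field_simps)
  qed
qed

end

theorem theorem2p6:
  fixes A T S :: "'a::chilbert \<Rightarrow> 'a"
  assumes "positive_op A" and "A \<noteq> (\<lambda>x. 0)"
    and "T \<in> BA A" and "S \<in> BA A"
  shows "omegaA A (T \<circ> S) \<le> 1/2 * omegaA A (S \<circ> T)
           + 1/4 * (opnormA A T * opnormA A S + opnormA A (T \<circ> S))"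
proof -
  interpret positive_operator A by (rule positive_operator.intro) (fact assms(1))
  obtain T' S' where T: "bounded_clinear_op T" "A_adjoint A T T'"
    and S: "bounded_clinear_op S" "A_adjoint A S S'"
    using assms(3,4) by (auto simp: BA_iff)
  have "A_bounded A T" "A_bounded A S"
    using assms(3,4) by (simp_all add: BA_A_bounded)
  note nT = normA_le_opnormA[OF \<open>A_bounded A T\<close> T(1)]
    and nS = normA_le_opnormA[OF \<open>A_bounded A S\<close> S(1)]
  have nTS: "normA A (T (S y)) \<le> opnormA A (T \<circ> S) * normA A y" for y
    using normA_le_opnormA[OF A_bounded_comp bounded_clinear_op_comp,
        OF \<open>A_bounded A T\<close> \<open>A_bounded A S\<close> T(1) S(1), of y] by simp
  have w: "cmod (cinner (A (S (T y))) y) \<le> omegaA A (S \<circ> T) * (normA A y)\<^sup>2" for y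
    using cmod_cinnerA_le_omegaA[OF A_bounded_comp bounded_clinear_op_comp,
        OF \<open>A_bounded A S\<close> \<open>A_bounded A T\<close> S(1) T(1), of y] by simp
  show ?thesis
  proof (rule omegaA_le)
    show "\<exists>x. normA A x = 1" using ex_normA_eq_1[OF assms(2)] .
    fix x assume "normA A x = 1"
    then show "cmod (cinner (A ((T \<circ> S) x)) x) \<le> 1/2 * omegaA A (S \<circ> T)
           + 1/4 * (opnormA A T * opnormA A S + opnormA A (T \<circ> S))"
      unfolding comp_apply[of T S x]
      by (rule cmod_cinnerA_comp_le[OF T(1) S(1) T(2) S(2) nT nS nTS w])
  qed
qed

end
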